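(* Let $C$ be a Reedy category. The quotient functor $q\colon\int N^{-,+}(C)\to\mathrm{Down}_*(C)$ exhibits $\mathrm{Down}_*(C)$ as the strict 1-localization of $\int N^{-,+}(C)$ at the set $W$ of morphisms of the form $(\sigma,\mathrm{id}_{X\circ\sigma})\colon([m],X\circ\sigma)\to([n],X)$ with $([n],X)$ an object and $\sigma\colon[m]\to[n]$ surjective. That is, $q$ sends every morphism in $W$ to an isomorphism, and every functor $G\colon\int N^{-,+}(C)\to E$ sending all morphisms of $W$ to isomorphisms factors as $G=H\circ q$ for a unique functor $H\colon\mathrm{Down}_*(C)\to E$.
   Context: A Reedy category $(C,C_-,C_+)$: wide subcategories with unique factorization of every morphism as ($C_-$ then $C_+$), membership in $C_\pm$ decidable, and the relation ($x<'y$ iff non-identity $x\to y$ in $C_+$ or non-identity $y\to x$ in $C_-$) well-founded. $\Delta$: finite ordinals $[n]$ and order-preserving maps. $\int N^{-,+}(C)$: objects $([n],X)$ with $X\colon[n]\to C$ a functor sending all morphisms into $C_-$; morphisms $([m],X)\to([n],Y)$ are $(\alpha,\theta)$ with $\alpha\colon[m]\to[n]$ in $\Delta$ and $\theta\colon X\Rightarrow Y\circ\alpha$ with all components in $C_+$; composition $(\beta,\varphi)\circ(\alpha,\theta)=(\beta\alpha,(\varphi\alpha)\circ\theta)$. Order on hom-sets: $(\alpha,\theta)\le(\alpha',\theta')$ iff $\alpha\le\alpha'$ pointwise and $\theta'_i=Y(\alpha(i)\le\alpha'(i))\circ\theta_i$ for all $i$ (compatible with composition). $\mathrm{Down}_*(C)$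 has the same objects as $\int N^{-,+}(C)$ and hom-sets the quotients by the equivalence relation generated by $\le$; $q$ is the identity on objects and the quotient map on morphisms. *)

theory Defs
  imports Main
begin

record ('o, 'm) cat =
  cOb :: "'o set"
  cAr :: "'m set"
  cDom :: "'m \<Rightarrow> 'o"
  cCod :: "'m \<Rightarrow> 'o"
  cId :: "'o \<Rightarrow> 'm"
  cComp :: "'m \<Rightarrow> 'm \<Rightarrow> 'm"   (* cComp C g f = g \<circ> f *)

definition category :: "('o, 'm) cat \<Rightarrow> bool" where
  "category C \<equiv>
     (\<forall>f\<in>cAr C. cDom C f \<in> cOb C \<and> cCod C f \<in> cOb C) \<and>
     (\<forall>a\<in>cOb C. cId C a \<in> cAr C \<and> cDom C (cId C a) = a \<and> cCod C (cId C a) = a) \<and>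
     (\<forall>f\<in>cAr C. \<forall>g\<in>cAr C. cCod C f = cDom C g \<longrightarrow>
        cComp C g f \<in> cAr C \<and> cDom C (cComp C g f) = cDom C f \<and> cCod C (cComp C g f) = cCod C g) \<and>
     (\<forall>f\<in>cAr C. cComp C f (cId C (cDom C f)) = f \<and> cComp C (cId C (cCod C f)) f = f) \<and>
     (\<forall>f\<in>cAr C. \<forall>g\<in>cAr C. \<forall>h\<in>cAr C. cCod C f = cDom C g \<longrightarrow> cCod C g = cDom C h \<longrightarrow>
        cComp C h (cComp C g f) = cComp C (cComp C h g) f)"

definition is_functor ::
  "('o, 'm) cat \<Rightarrow> ('p, 'n) cat \<Rightarrow> ('o \<Rightarrow> 'p) \<Rightarrow> ('m \<Rightarrow> 'n) \<Rightarrow> bool" where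
  "is_functor C D Fo Fm \<equiv>
     (\<forall>a\<in>cOb C. Fo a \<in> cOb D) \<and>
     (\<forall>f\<in>cAr C. Fm f \<in> cAr D \<and> cDom D (Fm f) = Fo (cDom C f) \<and> cCod D (Fm f) = Fo (cCod C f)) \<and>
     (\<forall>a\<in>cOb C. Fm (cId C a) = cId D (Fo a)) \<and>
     (\<forall>f\<in>cAr C. \<forall>g\<in>cAr C. cCod C f = cDom C g \<longrightarrow> Fm (cComp C g f) = cComp D (Fm g) (Fm f))"

definition iso :: "('o, 'm) cat \<Rightarrow> 'm \<Rightarrow> bool" where
  "iso C f \<equiv> f \<in> cAr C \<and>
     (\<exists>g\<in>cAr C. cDom C g = cCod C f \<and> cCod C g = cDom C f \<and>
        cComp C g f = cId C (cDom C f) \<and> cComp C f g = cId C (cCod C f))"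

definition wide_subcat :: "('o, 'm) cat \<Rightarrow> 'm set \<Rightarrow> bool" where
  "wide_subcat C S \<equiv> S \<subseteq> cAr C \<and> (\<forall>a\<in>cOb C. cId C a \<in> S) \<and>
     (\<forall>f\<in>S. \<forall>g\<in>S. cCod C f = cDom C g \<longrightarrow> cComp C g f \<in> S)"

definition reedy_lt :: "('o, 'm) cat \<Rightarrow> 'm set \<Rightarrow> 'm set \<Rightarrow> 'o \<Rightarrow> 'o \<Rightarrow> bool" where
  "reedy_lt C Cm Cp x y \<equiv>
     (\<exists>f\<in>Cp. cDom C f = x \<and> cCod C f = y \<and> f \<noteq> cId C x) \<or>
     (\<exists>f\<in>Cm. cDom C f = y \<and> cCod C f = x \<and> f \<noteq> cId C y)"

definition reedy :: "('o, 'm) cat \<Rightarrow> 'm set \<Rightarrow> 'm set \<Rightarrow> bool" where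
  "reedy C Cm Cp \<equiv> category C \<and> wide_subcat C Cm \<and> wide_subcat C Cp \<and>
     (\<forall>f\<in>cAr C. \<exists>!gh. fst gh \<in> Cm \<and> snd gh \<in> Cp \<and>
         cDom C (fst gh) = cDom C f \<and> cCod C (fst gh) = cDom C (snd gh) \<and>
         cCod C (snd gh) = cCod C f \<and> cComp C (snd gh) (fst gh) = f) \<and>
     wf {(x, y). x \<in> cOb C \<and> y \<in> cOb C \<and> reedy_lt C Cm Cp x y}"

text \<open>A map [m] \<rightarrow> [n] is a function nat \<Rightarrow> nat, made canonical by being undefined outside {0..m}.\<close>

definition delta_map :: "nat \<Rightarrow> nat \<Rightarrow> (nat \<Rightarrow> nat) \<Rightarrow> bool" where
  "delta_map m n \<alpha> \<equiv> (\<forall>i\<le>m. \<alpha> i \<le> n) \<and> (\<forall>i j. i \<le> j \<longrightarrow> j \<le> m \<longrightarrow> \<alpha> i \<le> \<alpha> j) \<and>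
     (\<forall>i>m. \<alpha> i = undefined)"

definition delta_surj :: "nat \<Rightarrow> nat \<Rightarrow> (nat \<Rightarrow> nat) \<Rightarrow> bool" where
  "delta_surj m n \<sigma> \<equiv> delta_map m n \<sigma> \<and> (\<forall>k\<le>n. \<exists>i\<le>m. \<sigma> i = k)"

text \<open>An object ([n], X): X given by objects X_i (i \<le> n) and arrows X(i\<le>j) : X_i \<rightarrow> X_j.\<close>

type_synonym ('o, 'm) nobj = "nat \<times> (nat \<Rightarrow> 'o) \<times> (nat \<Rightarrow> nat \<Rightarrow> 'm)"
type_synonym ('o, 'm) nmor = "('o, 'm) nobj \<times> ('o, 'm) nobj \<times> (nat \<Rightarrow> nat) \<times> (nat \<Rightarrow> 'm)"

definition ndim :: "('o, 'm) nobj \<Rightarrow> nat" where "ndim a = fst a"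
definition nob :: "('o, 'm) nobj \<Rightarrow> nat \<Rightarrow> 'o" where "nob a = fst (snd a)"
definition nar :: "('o, 'm) nobj \<Rightarrow> nat \<Rightarrow> nat \<Rightarrow> 'm" where "nar a = snd (snd a)"

definition mdom :: "('o, 'm) nmor \<Rightarrow> ('o, 'm) nobj" where "mdom f = fst f"
definition mcod :: "('o, 'm) nmor \<Rightarrow> ('o, 'm) nobj" where "mcod f = fst (snd f)"
definition mmap :: "('o, 'm) nmor \<Rightarrow> nat \<Rightarrow> nat" where "mmap f = fst (snd (snd f))"
definition mnat :: "('o, 'm) nmor \<Rightarrow> nat \<Rightarrow> 'm" where "mnat f = snd (snd (snd f))"

definition is_nobj :: "('o, 'm) cat \<Rightarrow> 'm set \<Rightarrow> ('o, 'm) nobj \<Rightarrow> bool" where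
  "is_nobj C Cm a \<equiv>
     (\<forall>i\<le>ndim a. nob a i \<in> cOb C) \<and>
     (\<forall>i j. i \<le> j \<longrightarrow> j \<le> ndim a \<longrightarrow>
        nar a i j \<in> Cm \<and> cDom C (nar a i j) = nob a i \<and> cCod C (nar a i j) = nob a j) \<and>
     (\<forall>i\<le>ndim a. nar a i i = cId C (nob a i)) \<and>
     (\<forall>i j k. i \<le> j \<longrightarrow> j \<le> k \<longrightarrow> k \<le> ndim a \<longrightarrow>
        cComp C (nar a j k) (nar a i j) = nar a i k) \<and>
     (\<forall>i>ndim a. nob a i = undefined) \<and>
     (\<forall>i j. \<not> (i \<le> j \<and> j \<le> ndim a) \<longrightarrow> nar a i j = undefined)"

definition is_nmor :: "('o, 'm) cat \<Rightarrow> 'm set \<Rightarrow> 'm set \<Rightarrow> ('o, 'm) nmor \<Rightarrow> bool" where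
  "is_nmor C Cm Cp f \<equiv>
     is_nobj C Cm (mdom f) \<and> is_nobj C Cm (mcod f) \<and>
     delta_map (ndim (mdom f)) (ndim (mcod f)) (mmap f) \<and>
     (\<forall>i\<le>ndim (mdom f). mnat f i \<in> Cp \<and> cDom C (mnat f i) = nob (mdom f) i \<and>
        cCod C (mnat f i) = nob (mcod f) (mmap f i)) \<and>
     (\<forall>i j. i \<le> j \<longrightarrow> j \<le> ndim (mdom f) \<longrightarrow>
        cComp C (nar (mcod f) (mmap f i) (mmap f j)) (mnat f i) = cComp C (mnat f j) (nar (mdom f) i j)) \<and>
     (\<forall>i>ndim (mdom f). mnat f i = undefined)"

definition intN :: "('o, 'm) cat \<Rightarrow> 'm set \<Rightarrow> 'm set \<Rightarrow> (('o, 'm) nobj, ('o, 'm) nmor) cat" where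
  "intN C Cm Cp = \<lparr>
     cOb = {a. is_nobj C Cm a},
     cAr = {f. is_nmor C Cm Cp f},
     cDom = mdom,
     cCod = mcod,
     cId = (\<lambda>a. (a, a, \<lambda>i. if i \<le> ndim a then i else undefined,
                      \<lambda>i. if i \<le> ndim a then cId C (nob a i) else undefined)),
     cComp = (\<lambda>g f. (mdom f, mcod g,
                      \<lambda>i. if i \<le> ndim (mdom f) then mmap g (mmap f i) else undefined,
                      \<lambda>i. if i \<le> ndim (mdom f) then cComp C (mnat g (mmap f i)) (mnat f i) else undefined)) \<rparr>"

definition nle :: "('o, 'm) cat \<Rightarrow> 'm set \<Rightarrow> 'm set \<Rightarrow> ('o, 'm) nmor \<Rightarrow> ('o, 'm) nmor \<Rightarrow> bool" where
  "nle C Cm Cp f f' \<equiv> is_nmor C Cm Cp f \<and> is_nmor C Cm Cp f' \<and>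
     mdom f = mdom f' \<and> mcod f = mcod f' \<and>
     (\<forall>i\<le>ndim (mdom f). mmap f i \<le> mmap f' i \<and>
        mnat f' i = cComp C (nar (mcod f) (mmap f i) (mmap f' i)) (mnat f i))"

definition nclass :: "('o, 'm) cat \<Rightarrow> 'm set \<Rightarrow> 'm set \<Rightarrow> ('o, 'm) nmor \<Rightarrow> ('o, 'm) nmor set" where
  "nclass C Cm Cp f = {g. equivclp (nle C Cm Cp) f g}"

definition Down :: "('o, 'm) cat \<Rightarrow> 'm set \<Rightarrow> 'm set \<Rightarrow> (('o, 'm) nobj, ('o, 'm) nmor set) cat" where
  "Down C Cm Cp = \<lparr>
     cOb = cOb (intN C Cm Cp),
     cAr = nclass C Cm Cp ` cAr (intN C Cm Cp),
     cDom = (\<lambda>F. mdom (SOME f. f \<in> F)),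
     cCod = (\<lambda>F. mcod (SOME f. f \<in> F)),
     cId = (\<lambda>a. nclass C Cm Cp (cId (intN C Cm Cp) a)),
     cComp = (\<lambda>G F. nclass C Cm Cp (cComp (intN C Cm Cp) (SOME g. g \<in> G) (SOME f. f \<in> F))) \<rparr>"

definition restr_obj :: "('o, 'm) nobj \<Rightarrow> nat \<Rightarrow> (nat \<Rightarrow> nat) \<Rightarrow> ('o, 'm) nobj" where
  "restr_obj a m \<sigma> = (m, \<lambda>i. if i \<le> m then nob a (\<sigma> i) else undefined,
                         \<lambda>i j. if i \<le> j \<and> j \<le> m then nar a (\<sigma> i) (\<sigma> j) else undefined)"

definition Wset :: "('o, 'm) cat \<Rightarrow> 'm set \<Rightarrow> ('o, 'm) nmor set" where
  "Wset C Cm = {(restr_obj a m \<sigma>, a, \<sigma>, \<lambda>i. if i \<le> m then cId C (nob a (\<sigma> i)) else undefined)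
                 | a m \<sigma>. is_nobj C Cm a \<and> delta_surj m (ndim a) \<sigma>}"

end

theory Submission
  imports Defs
begin

(*
  A morphism (\<sigma>, id) of W has the section (\<delta>, id), where \<delta> picks least preimages; the
  composite in the other order has underlying map \<delta> \<circ> \<sigma> \<le> id and is therefore \<le> id, so q
  inverts W.

  Conversely let G invert W. Then G identifies any two sections of one morphism of W. If
  f \<le> f', one passes from f to f' by switching the components at positions \<ge> k from f to f'
  for k = n+1, ..., 0. Two consecutive such splices are the composites of a single "cylinder"
  ([n+1], X \<circ> s_k) \<rightarrow> Y with the two sections d_{k+1}, d_k of the codegeneracy s_k, hence have
  the same image under G. So G is constant on the classes of Down_*(C) and factors through q,
  necessarily uniquely since q is bijective on objects and surjective on morphisms.
*)

lemma cat_id: "category C \<Longrightarrow> a \<in> cOb C \<Longrightarrow> cId C a \<in> cAr C"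
  unfolding category_def by blast

lemma cat_id_dom [simp]: "category C \<Longrightarrow> a \<in> cOb C \<Longrightarrow> cDom C (cId C a) = a"
  unfolding category_def by blast

lemma cat_id_cod [simp]: "category C \<Longrightarrow> a \<in> cOb C \<Longrightarrow> cCod C (cId C a) = a"
  unfolding category_def by blast

lemma cat_comp_dom:
  "category C \<Longrightarrow> f \<in> cAr C \<Longrightarrow> g \<in> cAr C \<Longrightarrow> cCod C f = cDom C g \<Longrightarrow>
   cDom C (cComp C g f) = cDom C f"
  unfolding category_def by blast

lemma cat_comp_cod:
  "category C \<Longrightarrow> f \<in> cAr C \<Longrightarrow> g \<in> cAr C \<Longrightarrow> cCod C f = cDom C g \<Longrightarrow>
   cCod C (cComp C g f) = cCod C g"
  unfolding category_def by blast

lemma cat_idr: "category C \<Longrightarrow> f \<in> cAr C \<Longrightarrow> cDom C f = a \<Longrightarrow> cComp C f (cId C a) = f"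
  unfolding category_def by blast

lemma cat_idl: "category C \<Longrightarrow> f \<in> cAr C \<Longrightarrow> cCod C f = a \<Longrightarrow> cComp C (cId C a) f = f"
  unfolding category_def by blast

lemma cat_id_comp_id: "category C \<Longrightarrow> a \<in> cOb C \<Longrightarrow> cComp C (cId C a) (cId C a) = cId C a"
  by (simp add: cat_id cat_idl)

lemma cat_assoc:
  "category C \<Longrightarrow> f \<in> cAr C \<Longrightarrow> g \<in> cAr C \<Longrightarrow> h \<in> cAr C \<Longrightarrow>
   cCod C f = cDom C g \<Longrightarrow> cCod C g = cDom C h \<Longrightarrow>
   cComp C h (cComp C g f) = cComp C (cComp C h g) f"
  unfolding category_def by blast

lemma cat_paste_squares:
  assumes cat: "category C"
    and ar: "f \<in> cAr C" "g \<in> cAr C" "f' \<in> cAr C" "g' \<in> cAr C" "p \<in> cAr C" "q \<in> cAr C" "r \<in> cAr C"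
    and ends: "cCod C f = cDom C g" "cCod C f' = cDom C g'" "cCod C p = cDom C f'"
      "cDom C q = cCod C f" "cCod C q = cDom C g'" "cDom C r = cCod C g"
    and sq1: "cComp C q f = cComp C f' p" and sq2: "cComp C r g = cComp C g' q"
  shows "cComp C r (cComp C g f) = cComp C (cComp C g' f') p"
proof -
  have "cComp C r (cComp C g f) = cComp C (cComp C g' q) f"
    using cat_assoc[OF cat ar(1,2,7)] ends sq2 by simp
  also have "\<dots> = cComp C g' (cComp C f' p)"
    using cat_assoc[OF cat ar(1,6,4)] ends sq1 by simp
  also have "\<dots> = cComp C (cComp C g' f') p"
    using cat_assoc[OF cat ar(5,3,4)] ends by simp
  finally show ?thesis .
qed

lemma iso_cancel_left:
  assumes cat: "category E" and r: "iso E r"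
    and a: "a \<in> cAr E" "cCod E a = cDom E r" and b: "b \<in> cAr E" "cCod E b = cDom E r"
    and eq: "cComp E r a = cComp E r b"
  shows "a = b"
proof -
  obtain g where g: "g \<in> cAr E" "cDom E g = cCod E r" "cComp E g r = cId E (cDom E r)"
    using r unfolding iso_def by blast
  have r_ar: "r \<in> cAr E" using r unfolding iso_def by blast
  have cancel: "x = cComp E g (cComp E r x)" if x: "x \<in> cAr E" "cCod E x = cDom E r" for x
  proof -
    have "x = cComp E (cComp E g r) x" using g(3) cat_idl[OF cat x] by simp
    also have "\<dots> = cComp E g (cComp E r x)" using cat_assoc[OF cat x(1) r_ar g(1)] x(2) g(2) by simp
    finally show ?thesis .
  qed
  show ?thesis using cancel[OF a] cancel[OF b] eq by simp
qed

lemma functorD: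
  assumes "is_functor C D Fo Fm"
  shows "\<And>a. a \<in> cOb C \<Longrightarrow> Fo a \<in> cOb D"
    "\<And>f. f \<in> cAr C \<Longrightarrow> Fm f \<in> cAr D"
    "\<And>f. f \<in> cAr C \<Longrightarrow> cDom D (Fm f) = Fo (cDom C f)"
    "\<And>f. f \<in> cAr C \<Longrightarrow> cCod D (Fm f) = Fo (cCod C f)"
    "\<And>a. a \<in> cOb C \<Longrightarrow> Fm (cId C a) = cId D (Fo a)"
    "\<And>f g. f \<in> cAr C \<Longrightarrow> g \<in> cAr C \<Longrightarrow> cCod C f = cDom C g \<Longrightarrow>
       Fm (cComp C g f) = cComp D (Fm g) (Fm f)"
  using assms unfolding is_functor_def by blast+

lemma wide_subcatD:
  assumes "wide_subcat C S"
  shows "S \<subseteq> cAr C" "\<And>a. a \<in> cOb C \<Longrightarrow> cId C a \<in> S"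
    "\<And>f g. f \<in> S \<Longrightarrow> g \<in> S \<Longrightarrow> cCod C f = cDom C g \<Longrightarrow> cComp C g f \<in> S"
  using assms unfolding wide_subcat_def by blast+

lemma equivclp_fun_eq:
  assumes "\<And>x y. R x y \<Longrightarrow> \<Phi> x = \<Phi> y" and "equivclp R a b"
  shows "\<Phi> a = \<Phi> b"
  using assms(2) by (induction rule: equivclp_induct) (auto dest: assms(1))

lemma equivclp_map:
  assumes inv: "\<And>x y. R x y \<Longrightarrow> P x = P y"
    and map: "\<And>x y. R x y \<Longrightarrow> P x \<Longrightarrow> S (h x) (h y)"
    and ab: "equivclp R a b" and a: "P a"
  shows "equivclp S (h a) (h b)"
  using ab
proof (induction rule: equivclp_induct)
  case (step y z)
  have "P y" using equivclp_fun_eq[of R P, OF inv step.hyps(1)] a by simp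
  from step.hyps(2) have "equivclp S (h y) (h z)"
  proof
    assume "R y z"
    then show ?thesis using map[of y z] \<open>P y\<close> by (simp add: r_into_equivclp)
  next
    assume "R z y"
    then have "P z" using inv[of z y] \<open>P y\<close> by simp
    with \<open>R z y\<close> show ?thesis using map[of z y] by (simp add: converse_r_into_equivclp)
  qed
  with step.IH show ?case by (rule equivclp_trans)
qed simp

lemma nmor_simps [simp]: "mdom (a, b, c, d) = a" "mcod (a, b, c, d) = b" "mmap (a, b, c, d) = c" "mnat (a, b, c, d) = d"
  by (simp_all add: mdom_def mcod_def mmap_def mnat_def)

lemma nobj_simps [simp]: "ndim (a, b, c) = a" "nob (a, b, c) = b" "nar (a, b, c) = c"
  by (simp_all add: ndim_def nob_def nar_def)

lemma nmor_eta: "(mdom f, mcod f, mmap f, mnat f) = f"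
  by (simp add: mdom_def mcod_def mmap_def mnat_def)

lemma intN_simps [simp]:
  "cOb (intN C Cm Cp) = {a. is_nobj C Cm a}"
  "cAr (intN C Cm Cp) = {f. is_nmor C Cm Cp f}"
  "cDom (intN C Cm Cp) = mdom" "cCod (intN C Cm Cp) = mcod"
  by (simp_all add: intN_def)

lemma intN_comp:
  "cComp (intN C Cm Cp) g f = (mdom f, mcod g,
     \<lambda>i. if i \<le> ndim (mdom f) then mmap g (mmap f i) else undefined,
     \<lambda>i. if i \<le> ndim (mdom f) then cComp C (mnat g (mmap f i)) (mnat f i) else undefined)"
  by (simp add: intN_def)

lemma intN_id:
  "cId (intN C Cm Cp) a = (a, a, \<lambda>i. if i \<le> ndim a then i else undefined,
     \<lambda>i. if i \<le> ndim a then cId C (nob a i) else undefined)"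
  by (simp add: intN_def)

lemma nobjD:
  assumes "is_nobj C Cm a"
  shows "\<And>i. i \<le> ndim a \<Longrightarrow> nob a i \<in> cOb C"
    "\<And>i j. i \<le> j \<Longrightarrow> j \<le> ndim a \<Longrightarrow> nar a i j \<in> Cm"
    "\<And>i j. i \<le> j \<Longrightarrow> j \<le> ndim a \<Longrightarrow> cDom C (nar a i j) = nob a i"
    "\<And>i j. i \<le> j \<Longrightarrow> j \<le> ndim a \<Longrightarrow> cCod C (nar a i j) = nob a j"
    "\<And>i. i \<le> ndim a \<Longrightarrow> nar a i i = cId C (nob a i)"
    "\<And>i j k. i \<le> j \<Longrightarrow> j \<le> k \<Longrightarrow> k \<le> ndim a \<Longrightarrow> cComp C (nar a j k) (nar a i j) = nar a i k"
  using assms unfolding is_nobj_def by blast+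

lemma nmorD:
  assumes "is_nmor C Cm Cp f"
  shows "is_nobj C Cm (mdom f)" "is_nobj C Cm (mcod f)"
    "\<And>i. i \<le> ndim (mdom f) \<Longrightarrow> mmap f i \<le> ndim (mcod f)"
    "\<And>i j. i \<le> j \<Longrightarrow> j \<le> ndim (mdom f) \<Longrightarrow> mmap f i \<le> mmap f j"
    "\<And>i. i > ndim (mdom f) \<Longrightarrow> mmap f i = undefined"
    "\<And>i. i \<le> ndim (mdom f) \<Longrightarrow> mnat f i \<in> Cp"
    "\<And>i. i \<le> ndim (mdom f) \<Longrightarrow> cDom C (mnat f i) = nob (mdom f) i"
    "\<And>i. i \<le> ndim (mdom f) \<Longrightarrow> cCod C (mnat f i) = nob (mcod f) (mmap f i)"
    "\<And>i j. i \<le> j \<Longrightarrow> j \<le> ndim (mdom f) \<Longrightarrow>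
        cComp C (nar (mcod f) (mmap f i) (mmap f j)) (mnat f i) = cComp C (mnat f j) (nar (mdom f) i j)"
    "\<And>i. i > ndim (mdom f) \<Longrightarrow> mnat f i = undefined"
  using assms unfolding is_nmor_def delta_map_def by blast+

lemma nmorI:
  assumes "is_nobj C Cm X" "is_nobj C Cm Y" "ndim X = n"
    and "\<And>i. i \<le> n \<Longrightarrow> \<alpha> i \<le> ndim Y" "\<And>i j. i \<le> j \<Longrightarrow> j \<le> n \<Longrightarrow> \<alpha> i \<le> \<alpha> j"
    and "\<And>i. i \<le> n \<Longrightarrow> \<theta> i \<in> Cp"
    and "\<And>i. i \<le> n \<Longrightarrow> cDom C (\<theta> i) = nob X i" "\<And>i. i \<le> n \<Longrightarrow> cCod C (\<theta> i) = nob Y (\<alpha> i)"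
    and "\<And>i j. i \<le> j \<Longrightarrow> j \<le> n \<Longrightarrow>
      cComp C (nar Y (\<alpha> i) (\<alpha> j)) (\<theta> i) = cComp C (\<theta> j) (nar X i j)"
  shows "is_nmor C Cm Cp
    (X, Y, \<lambda>i. if i \<le> n then \<alpha> i else undefined, \<lambda>i. if i \<le> n then \<theta> i else undefined)"
  unfolding is_nmor_def delta_map_def using assms by auto

lemma nleD:
  assumes "nle C Cm Cp f f'"
  shows "is_nmor C Cm Cp f" "is_nmor C Cm Cp f'" "mdom f' = mdom f" "mcod f' = mcod f"
    "\<And>i. i \<le> ndim (mdom f) \<Longrightarrow> mmap f i \<le> mmap f' i"
    "\<And>i. i \<le> ndim (mdom f) \<Longrightarrow> mnat f' i = cComp C (nar (mcod f) (mmap f i) (mmap f' i)) (mnat f i)"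
  using assms unfolding nle_def by auto

lemma nobj_restr:
  assumes a: "is_nobj C Cm a" and s: "delta_map m (ndim a) \<sigma>"
  shows "is_nobj C Cm (restr_obj a m \<sigma>)"
proof -
  note X = nobjD[OF a]
  have s1: "\<And>i. i \<le> m \<Longrightarrow> \<sigma> i \<le> ndim a" and s2: "\<And>i j. i \<le> j \<Longrightarrow> j \<le> m \<Longrightarrow> \<sigma> i \<le> \<sigma> j"
    using s unfolding delta_map_def by auto
  show ?thesis unfolding is_nobj_def restr_obj_def nobj_simps
  proof (intro conjI allI impI)
    fix i j k assume "i \<le> j" "j \<le> k" "k \<le> m"
    then show "cComp C (if j \<le> k \<and> k \<le> m then nar a (\<sigma> j) (\<sigma> k) else undefined)
        (if i \<le> j \<and> j \<le> m then nar a (\<sigma> i) (\<sigma> j) else undefined) =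
       (if i \<le> k \<and> k \<le> m then nar a (\<sigma> i) (\<sigma> k) else undefined)"
      using X(6)[of "\<sigma> i" "\<sigma> j" "\<sigma> k"] s1 s2 by auto
  qed (use X s1 s2 in auto)
qed

lemma restr_obj_simps [simp]:
  "ndim (restr_obj a m \<sigma>) = m"
  "nob (restr_obj a m \<sigma>) i = (if i \<le> m then nob a (\<sigma> i) else undefined)"
  "nar (restr_obj a m \<sigma>) i j = (if i \<le> j \<and> j \<le> m then nar a (\<sigma> i) (\<sigma> j) else undefined)"
  by (simp_all add: restr_obj_def)

locale wide_subcats =
  fixes C :: "('o, 'm) cat" and Cm Cp :: "'m set"
  assumes category: "category C" and wide_m: "wide_subcat C Cm" and wide_p: "wide_subcat C Cp"
begin

abbreviation N where "N \<equiv> intN C Cm Cp"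

lemma Cm_arr: "Cm \<subseteq> cAr C" and Cp_arr: "Cp \<subseteq> cAr C"
  using wide_subcatD(1) wide_m wide_p by auto

lemma nmor_comp:
  assumes f: "is_nmor C Cm Cp f" and g: "is_nmor C Cm Cp g" and fg: "mcod f = mdom g"
  shows "is_nmor C Cm Cp (cComp N g f)"
  unfolding intN_comp
proof (rule nmorI)
  note F = nmorD[OF f] and G = nmorD[OF g, folded fg]
  note X = nobjD[OF F(1)] and Y = nobjD[OF F(2)] and Z = nobjD[OF G(2)]
  show "is_nobj C Cm (mdom f)" "is_nobj C Cm (mcod g)" using F(1) G(2) .
  have f_ar: "mnat f i \<in> cAr C" and g_ar: "mnat g (mmap f i) \<in> cAr C"
    and f_g: "cCod C (mnat f i) = cDom C (mnat g (mmap f i))" if i: "i \<le> ndim (mdom f)" for i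
    using F(3,6,8)[OF i] G(6,7)[OF F(3)[OF i]] Cp_arr by auto
  fix i assume i: "i \<le> ndim (mdom f)"
  show "mmap g (mmap f i) \<le> ndim (mcod g)" using G(3) F(3) i by simp
  show "cComp C (mnat g (mmap f i)) (mnat f i) \<in> Cp"
    using wide_subcatD(3)[OF wide_p F(6)[OF i] G(6)[OF F(3)[OF i]] f_g[OF i]] .
  show "cDom C (cComp C (mnat g (mmap f i)) (mnat f i)) = nob (mdom f) i"
    using cat_comp_dom[OF category f_ar g_ar f_g] F(7) i by simp
  show "cCod C (cComp C (mnat g (mmap f i)) (mnat f i)) = nob (mcod g) (mmap g (mmap f i))"
    using cat_comp_cod[OF category f_ar g_ar f_g] G(8) F(3) i by simp
next
  note F = nmorD[OF f] and G = nmorD[OF g, folded fg]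
  note X = nobjD[OF F(1)] and Y = nobjD[OF F(2)] and Z = nobjD[OF G(2)]
  fix i j assume ij: "i \<le> j" "j \<le> ndim (mdom f)"
  have a: "mmap f i \<le> mmap f j" "mmap f j \<le> ndim (mcod f)" using ij F(3,4) by auto
  have b: "mmap g (mmap f i) \<le> mmap g (mmap f j)" "mmap g (mmap f j) \<le> ndim (mcod g)"
    using a G(3,4) by auto
  show "mmap g (mmap f i) \<le> mmap g (mmap f j)" using b(1) .
  show "cComp C (nar (mcod g) (mmap g (mmap f i)) (mmap g (mmap f j))) (cComp C (mnat g (mmap f i)) (mnat f i))
      = cComp C (cComp C (mnat g (mmap f j)) (mnat f j)) (nar (mdom f) i j)"
  proof (rule cat_paste_squares[OF category])
    show "mnat f i \<in> cAr C" "mnat f j \<in> cAr C" "mnat g (mmap f i) \<in> cAr C" "mnat g (mmap f j) \<in> cAr C"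
      using F(6) G(6) a ij Cp_arr by auto
    show "nar (mdom f) i j \<in> cAr C" "nar (mcod f) (mmap f i) (mmap f j) \<in> cAr C"
      "nar (mcod g) (mmap g (mmap f i)) (mmap g (mmap f j)) \<in> cAr C"
      using X(2) Y(2) Z(2) a b ij Cm_arr by auto
    show "cComp C (nar (mcod f) (mmap f i) (mmap f j)) (mnat f i) = cComp C (mnat f j) (nar (mdom f) i j)"
      using F(9) ij .
    show "cComp C (nar (mcod g) (mmap g (mmap f i)) (mmap g (mmap f j))) (mnat g (mmap f i))
        = cComp C (mnat g (mmap f j)) (nar (mcod f) (mmap f i) (mmap f j))"
      using G(9) a .
  qed (use F(7,8) G(7,8) X(3,4) Y(3,4) Z(3,4) a b ij in auto)
qed simp

lemma nmor_id:
  assumes a: "is_nobj C Cm a"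
  shows "is_nmor C Cm Cp (cId N a)"
  unfolding intN_id
proof (rule nmorI)
  note X = nobjD[OF a]
  fix i j assume ij: "i \<le> j" "j \<le> ndim a"
  have n: "nar a i j \<in> cAr C" using X(2) ij Cm_arr by auto
  show "cComp C (nar a i j) (cId C (nob a i)) = cComp C (cId C (nob a j)) (nar a i j)"
    using cat_idr[OF category n] cat_idl[OF category n] X(3,4) ij by simp
qed (use a nobjD(1)[OF a] wide_subcatD(2)[OF wide_p] category in simp_all)

lemma nle_comp_left:
  assumes le: "nle C Cm Cp f f'" and g: "is_nmor C Cm Cp g" and fg: "mcod f = mdom g"
  shows "nle C Cm Cp (cComp N g f) (cComp N g f')"
proof -
  note L = nleD[OF le] and F = nmorD[OF nleD(1)[OF le]] and G = nmorD[OF g]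
  note F' = nmorD[OF L(2), unfolded L(3,4)]
  note Y = nobjD[OF F(2)] and Z = nobjD[OF G(2)]
  show ?thesis unfolding nle_def
  proof (intro conjI allI impI)
    show "is_nmor C Cm Cp (cComp N g f)" "is_nmor C Cm Cp (cComp N g f')"
      using nmor_comp[OF L(1) g fg] nmor_comp[OF L(2) g] fg L(4) by auto
    show "mdom (cComp N g f) = mdom (cComp N g f')" "mcod (cComp N g f) = mcod (cComp N g f')"
      using L(3) by (auto simp: intN_comp)
  next
    fix i assume "i \<le> ndim (mdom (cComp N g f))"
    then have i: "i \<le> ndim (mdom f)" by (simp add: intN_comp)
    let ?a = "mmap f i" and ?b = "mmap f' i"
    have ab: "?a \<le> ?b" "?b \<le> ndim (mdom g)" using L(5) i F'(3) fg by auto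
    show "mmap (cComp N g f) i \<le> mmap (cComp N g f') i"
      using i ab G(4) L(3) by (auto simp: intN_comp)
    have nY: "nar (mdom g) ?a ?b \<in> cAr C" using Y(2) ab Cm_arr fg by auto
    have nZ: "nar (mcod g) (mmap g ?a) (mmap g ?b) \<in> cAr C"
      using Z(2) ab G(3,4) Cm_arr by (meson le_trans subsetD)
    have ga: "mnat g ?a \<in> cAr C" and gb: "mnat g ?b \<in> cAr C" using G(6) Cp_arr ab by auto
    have fa: "mnat f i \<in> cAr C" using F(6) Cp_arr i by auto
    have "cComp C (mnat g ?b) (mnat f' i) = cComp C (mnat g ?b) (cComp C (nar (mdom g) ?a ?b) (mnat f i))"
      using L(6) i fg by auto
    also have "\<dots> = cComp C (cComp C (mnat g ?b) (nar (mdom g) ?a ?b)) (mnat f i)"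
      using cat_assoc[OF category fa nY gb] i F(8) Y(3,4) G(7) ab fg by auto
    also have "\<dots> = cComp C (cComp C (nar (mcod g) (mmap g ?a) (mmap g ?b)) (mnat g ?a)) (mnat f i)"
      using G(9) ab by auto
    also have "\<dots> = cComp C (nar (mcod g) (mmap g ?a) (mmap g ?b)) (cComp C (mnat g ?a) (mnat f i))"
      using cat_assoc[OF category fa ga nZ] i F(8) G(7,8) Z(3) ab fg G(3,4) by (metis le_trans)
    finally show "mnat (cComp N g f') i =
        cComp C (nar (mcod (cComp N g f)) (mmap (cComp N g f) i) (mmap (cComp N g f') i))
          (mnat (cComp N g f) i)"
      using i L(3) by (simp add: intN_comp)
  qed
qed

lemma nle_comp_right:
  assumes le: "nle C Cm Cp f f'" and h: "is_nmor C Cm Cp h" and hf: "mcod h = mdom f"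
  shows "nle C Cm Cp (cComp N f h) (cComp N f' h)"
proof -
  note L = nleD[OF le] and F = nmorD[OF nleD(1)[OF le]] and H = nmorD[OF h]
  note F' = nmorD[OF L(2), unfolded L(3,4)]
  note Y = nobjD[OF F(2)]
  show ?thesis unfolding nle_def
  proof (intro conjI allI impI)
    show "is_nmor C Cm Cp (cComp N f h)" "is_nmor C Cm Cp (cComp N f' h)"
      using nmor_comp[OF h L(1) hf] nmor_comp[OF h L(2)] hf L(3) by auto
    show "mdom (cComp N f h) = mdom (cComp N f' h)" "mcod (cComp N f h) = mcod (cComp N f' h)"
      using L(4) by (auto simp: intN_comp)
  next
    fix i assume "i \<le> ndim (mdom (cComp N f h))"
    then have i: "i \<le> ndim (mdom h)" by (simp add: intN_comp)
    let ?e = "mmap h i"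
    have e: "?e \<le> ndim (mdom f)" using H(3) i hf by auto
    let ?a = "mmap f ?e" and ?b = "mmap f' ?e"
    have ab: "?a \<le> ?b" "?b \<le> ndim (mcod f)" using L(5) e F'(3) by auto
    show "mmap (cComp N f h) i \<le> mmap (cComp N f' h) i"
      using i ab by (auto simp: intN_comp)
    have nY: "nar (mcod f) ?a ?b \<in> cAr C" using Y(2) ab Cm_arr by auto
    have fa: "mnat f ?e \<in> cAr C" using F(6) Cp_arr e by auto
    have ha: "mnat h i \<in> cAr C" using H(6) Cp_arr i by auto
    have "cComp C (mnat f' ?e) (mnat h i) = cComp C (cComp C (nar (mcod f) ?a ?b) (mnat f ?e)) (mnat h i)"
      using L(6) e by auto
    also have "\<dots> = cComp C (nar (mcod f) ?a ?b) (cComp C (mnat f ?e) (mnat h i))"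
      using cat_assoc[OF category ha fa nY] i H(8) F(7,8) Y(3) ab e hf by auto
    finally show "mnat (cComp N f' h) i =
        cComp C (nar (mcod (cComp N f h)) (mmap (cComp N f h) i) (mmap (cComp N f' h) i))
          (mnat (cComp N f h) i)"
      using i L(3) by (simp add: intN_comp)
  qed
qed

lemma equivclp_nle_comp_left:
  assumes "equivclp (nle C Cm Cp) f f'" and g: "is_nmor C Cm Cp g" and "mcod f = mdom g"
  shows "equivclp (nle C Cm Cp) (cComp N g f) (cComp N g f')"
proof (rule equivclp_map[where P = "\<lambda>x. mcod x = mdom g" and h = "\<lambda>x. cComp N g x"])
  fix x y assume "nle C Cm Cp x y"
  then show "(mcod x = mdom g) = (mcod y = mdom g)" using nleD(4) by metis
next
  fix x y assume "nle C Cm Cp x y" "mcod x = mdom g"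
  then show "nle C Cm Cp (cComp N g x) (cComp N g y)" using nle_comp_left g by blast
qed (use assms in simp_all)

lemma equivclp_nle_comp_right:
  assumes "equivclp (nle C Cm Cp) f f'" and h: "is_nmor C Cm Cp h" and "mcod h = mdom f"
  shows "equivclp (nle C Cm Cp) (cComp N f h) (cComp N f' h)"
proof (rule equivclp_map[where P = "\<lambda>x. mcod h = mdom x" and h = "\<lambda>x. cComp N x h"])
  fix x y assume "nle C Cm Cp x y"
  then show "(mcod h = mdom x) = (mcod h = mdom y)" using nleD(3) by metis
next
  fix x y assume "nle C Cm Cp x y" "mcod h = mdom x"
  then show "nle C Cm Cp (cComp N x h) (cComp N y h)" using nle_comp_right h by blast
qed (use assms in simp_all)

end

lemma nclass_self: "f \<in> nclass C Cm Cp f"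
  unfolding nclass_def by simp

lemma nclass_eq: "equivclp (nle C Cm Cp) f g \<Longrightarrow> nclass C Cm Cp f = nclass C Cm Cp g"
  unfolding nclass_def by (auto intro: equivclp_trans equivclp_sym)

lemma equivclp_nclass_some: "equivclp (nle C Cm Cp) f (SOME g. g \<in> nclass C Cm Cp f)"
  using someI[of "\<lambda>g. g \<in> nclass C Cm Cp f", OF nclass_self] unfolding nclass_def by simp

lemma equivclp_nle_dom: "equivclp (nle C Cm Cp) f g \<Longrightarrow> mdom f = mdom g"
  by (rule equivclp_fun_eq[of "nle C Cm Cp"]) (metis nleD(3))

lemma equivclp_nle_cod: "equivclp (nle C Cm Cp) f g \<Longrightarrow> mcod f = mcod g"
  by (rule equivclp_fun_eq[of "nle C Cm Cp"]) (metis nleD(4))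

lemma equivclp_nle_nmor: "equivclp (nle C Cm Cp) f g \<Longrightarrow> is_nmor C Cm Cp f = is_nmor C Cm Cp g"
  by (rule equivclp_fun_eq[of "nle C Cm Cp"]) (metis nleD(1,2))

lemma Down_simps:
  "cOb (Down C Cm Cp) = {a. is_nobj C Cm a}"
  "cAr (Down C Cm Cp) = nclass C Cm Cp ` {f. is_nmor C Cm Cp f}"
  "cId (Down C Cm Cp) a = nclass C Cm Cp (cId (intN C Cm Cp) a)"
  "cDom (Down C Cm Cp) (nclass C Cm Cp f) = mdom f"
  "cCod (Down C Cm Cp) (nclass C Cm Cp f) = mcod f"
  using equivclp_nle_dom[OF equivclp_nclass_some, symmetric]
    equivclp_nle_cod[OF equivclp_nclass_some, symmetric]
  unfolding Down_def by simp_all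

context wide_subcats
begin

lemma Down_comp:
  assumes f: "is_nmor C Cm Cp f" and g: "is_nmor C Cm Cp g" and fg: "mcod f = mdom g"
  shows "cComp (Down C Cm Cp) (nclass C Cm Cp g) (nclass C Cm Cp f) = nclass C Cm Cp (cComp N g f)"
proof -
  define g0 where "g0 = (SOME h. h \<in> nclass C Cm Cp g)"
  define f0 where "f0 = (SOME h. h \<in> nclass C Cm Cp f)"
  have g0: "equivclp (nle C Cm Cp) g g0" and f0: "equivclp (nle C Cm Cp) f f0"
    unfolding g0_def f0_def by (rule equivclp_nclass_some)+
  have "equivclp (nle C Cm Cp) (cComp N g f) (cComp N g f0)"
    using equivclp_nle_comp_left[OF f0 g fg] .
  also have "equivclp (nle C Cm Cp) (cComp N g f0) (cComp N g0 f0)"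
    using equivclp_nle_comp_right[OF g0] equivclp_nle_nmor[OF f0] equivclp_nle_cod[OF f0] f fg
    by simp
  finally show ?thesis
    unfolding Down_def using g0_def f0_def nclass_eq by (metis cat.select_convs(6))
qed

end

section \<open>Morphisms of W and their sections\<close>

definition wmor :: "('o, 'm) cat \<Rightarrow> ('o, 'm) nobj \<Rightarrow> nat \<Rightarrow> (nat \<Rightarrow> nat) \<Rightarrow> ('o, 'm) nmor" where
  "wmor C a m \<sigma> = (restr_obj a m \<sigma>, a, \<sigma>, \<lambda>i. if i \<le> m then cId C (nob a (\<sigma> i)) else undefined)"

definition wsec ::
  "('o, 'm) cat \<Rightarrow> ('o, 'm) nobj \<Rightarrow> nat \<Rightarrow> (nat \<Rightarrow> nat) \<Rightarrow> (nat \<Rightarrow> nat) \<Rightarrow> ('o, 'm) nmor" where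
  "wsec C a m \<sigma> \<delta> = (a, restr_obj a m \<sigma>, \<delta>, \<lambda>i. if i \<le> ndim a then cId C (nob a i) else undefined)"

lemma Wset_eq: "Wset C Cm = {wmor C a m \<sigma> | a m \<sigma>. is_nobj C Cm a \<and> delta_surj m (ndim a) \<sigma>}"
  unfolding Wset_def wmor_def by simp

lemma delta_surj_least_section:
  assumes su: "delta_surj m n \<sigma>"
  obtains \<delta> where "delta_map n m \<delta>" "\<And>j. j \<le> n \<Longrightarrow> \<sigma> (\<delta> j) = j" "\<And>i. i \<le> m \<Longrightarrow> \<delta> (\<sigma> i) \<le> i"
proof -
  have s1: "\<And>i. i \<le> m \<Longrightarrow> \<sigma> i \<le> n" and s2: "\<And>i j. i \<le> j \<Longrightarrow> j \<le> m \<Longrightarrow> \<sigma> i \<le> \<sigma> j"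
    and ex: "\<And>j. j \<le> n \<Longrightarrow> \<exists>i\<le>m. \<sigma> i = j"
    using su unfolding delta_surj_def delta_map_def by auto
  define \<delta> where "\<delta> = (\<lambda>j. if j \<le> n then (LEAST i. \<sigma> i = j) else undefined)"
  have sd: "\<sigma> (\<delta> j) = j \<and> \<delta> j \<le> m" if j: "j \<le> n" for j
  proof -
    obtain i where i: "i \<le> m" "\<sigma> i = j" using ex[OF j] by blast
    have "\<sigma> (LEAST i. \<sigma> i = j) = j" using LeastI[of "\<lambda>i. \<sigma> i = j", OF i(2)] .
    moreover have "(LEAST i. \<sigma> i = j) \<le> i" using Least_le[of "\<lambda>i. \<sigma> i = j", OF i(2)] .
    ultimately show ?thesis using i j unfolding \<delta>_def by simp
  qed
  have ds: "\<delta> (\<sigma> i) \<le> i" if "i \<le> m" for i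
    using Least_le[of "\<lambda>k. \<sigma> k = \<sigma> i" i] s1[OF that] unfolding \<delta>_def by simp
  have "delta_map n m \<delta>"
    unfolding delta_map_def
  proof (intro conjI allI impI)
    fix j j' assume jj: "j \<le> j'" "j' \<le> n"
    show "\<delta> j \<le> \<delta> j'"
    proof (rule ccontr)
      assume "\<not> \<delta> j \<le> \<delta> j'"
      then have "\<sigma> (\<delta> j') \<le> \<sigma> (\<delta> j)" using s2[of "\<delta> j'" "\<delta> j"] sd jj by simp
      then have "j = j'" using sd jj by simp
      with \<open>\<not> \<delta> j \<le> \<delta> j'\<close> show False by simp
    qed
  qed (use sd in \<open>auto simp: \<delta>_def\<close>)
  with sd ds show ?thesis using that by blast
qed

context wide_subcats
begin

lemma wmor_nmor:
  assumes a: "is_nobj C Cm a" and s: "delta_map m (ndim a) \<sigma>"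
  shows "is_nmor C Cm Cp (wmor C a m \<sigma>)"
proof -
  note X = nobjD[OF a]
  have s1: "\<And>i. i \<le> m \<Longrightarrow> \<sigma> i \<le> ndim a" and s2: "\<And>i j. i \<le> j \<Longrightarrow> j \<le> m \<Longrightarrow> \<sigma> i \<le> \<sigma> j"
    and s3: "(\<lambda>i. if i \<le> m then \<sigma> i else undefined) = \<sigma>"
    using s unfolding delta_map_def by auto
  have "is_nmor C Cm Cp (restr_obj a m \<sigma>, a, \<lambda>i. if i \<le> m then \<sigma> i else undefined,
      \<lambda>i. if i \<le> m then cId C (nob a (\<sigma> i)) else undefined)"
  proof (rule nmorI)
    fix i j assume ij: "i \<le> j" "j \<le> m"
    have n: "nar a (\<sigma> i) (\<sigma> j) \<in> cAr C" using X(2) ij s1 s2 Cm_arr by auto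
    show "cComp C (nar a (\<sigma> i) (\<sigma> j)) (cId C (nob a (\<sigma> i)))
        = cComp C (cId C (nob a (\<sigma> j))) (nar (restr_obj a m \<sigma>) i j)"
      using cat_idr[OF category n] cat_idl[OF category n] X(3,4) ij s1 s2 by simp
  qed (use a s1 s2 X(1) category wide_subcatD(2)[OF wide_p] nobj_restr[OF a s] in simp_all)
  then show ?thesis unfolding wmor_def s3 .
qed

lemma wsec_nmor:
  assumes a: "is_nobj C Cm a" and s: "delta_map m (ndim a) \<sigma>" and d: "delta_map (ndim a) m \<delta>"
    and sd: "\<And>i. i \<le> ndim a \<Longrightarrow> \<sigma> (\<delta> i) = i"
  shows "is_nmor C Cm Cp (wsec C a m \<sigma> \<delta>)"
proof -
  note X = nobjD[OF a]
  have d1: "\<And>i. i \<le> ndim a \<Longrightarrow> \<delta> i \<le> m" and d2: "\<And>i j. i \<le> j \<Longrightarrow> j \<le> ndim a \<Longrightarrow> \<delta> i \<le> \<delta> j"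
    and d3: "(\<lambda>i. if i \<le> ndim a then \<delta> i else undefined) = \<delta>"
    using d unfolding delta_map_def by auto
  have "is_nmor C Cm Cp (a, restr_obj a m \<sigma>, \<lambda>i. if i \<le> ndim a then \<delta> i else undefined,
      \<lambda>i. if i \<le> ndim a then cId C (nob a i) else undefined)"
  proof (rule nmorI)
    fix i j assume ij: "i \<le> j" "j \<le> ndim a"
    have n: "nar a i j \<in> cAr C" using X(2) ij Cm_arr by auto
    show "cComp C (nar (restr_obj a m \<sigma>) (\<delta> i) (\<delta> j)) (cId C (nob a i))
        = cComp C (cId C (nob a j)) (nar a i j)"
      using cat_idr[OF category n] cat_idl[OF category n] X(3,4) ij d1 d2 sd by simp
  qed (use a d1 d2 sd X(1) category wide_subcatD(2)[OF wide_p] nobj_restr[OF a s] in simp_all)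
  then show ?thesis unfolding wsec_def d3 .
qed

lemma wmor_comp_wsec:
  assumes a: "is_nobj C Cm a" and d: "delta_map (ndim a) m \<delta>"
    and sd: "\<And>i. i \<le> ndim a \<Longrightarrow> \<sigma> (\<delta> i) = i"
  shows "cComp N (wmor C a m \<sigma>) (wsec C a m \<sigma> \<delta>) = cId N a"
proof -
  have d1: "\<And>i. i \<le> ndim a \<Longrightarrow> \<delta> i \<le> m" using d unfolding delta_map_def by auto
  show ?thesis
    unfolding intN_comp intN_id wmor_def wsec_def nmor_simps
    using sd d1 cat_id_comp_id[OF category nobjD(1)[OF a]] by (auto intro!: ext)
qed

lemma wsec_comp_wmor_le_id:
  assumes a: "is_nobj C Cm a" and s: "delta_map m (ndim a) \<sigma>" and d: "delta_map (ndim a) m \<delta>"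
    and sd: "\<And>j. j \<le> ndim a \<Longrightarrow> \<sigma> (\<delta> j) = j" and ds: "\<And>i. i \<le> m \<Longrightarrow> \<delta> (\<sigma> i) \<le> i"
  shows "nle C Cm Cp (cComp N (wsec C a m \<sigma> \<delta>) (wmor C a m \<sigma>)) (cId N (restr_obj a m \<sigma>))"
  unfolding nle_def
proof (intro conjI allI impI)
  show "is_nmor C Cm Cp (cComp N (wsec C a m \<sigma> \<delta>) (wmor C a m \<sigma>))"
    using nmor_comp[OF wmor_nmor[OF a s] wsec_nmor[OF a s d sd]] by (simp add: wmor_def wsec_def)
  show "is_nmor C Cm Cp (cId N (restr_obj a m \<sigma>))" using nmor_id[OF nobj_restr[OF a s]] .
next
  fix i assume "i \<le> ndim (mdom (cComp N (wsec C a m \<sigma> \<delta>) (wmor C a m \<sigma>)))"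
  then have i: "i \<le> m" by (simp add: intN_comp wmor_def)
  have si: "\<sigma> i \<le> ndim a" using s i unfolding delta_map_def by simp
  note X = nobjD[OF a]
  show "mmap (cComp N (wsec C a m \<sigma> \<delta>) (wmor C a m \<sigma>)) i \<le> mmap (cId N (restr_obj a m \<sigma>)) i"
    using i ds by (simp add: intN_comp intN_id wmor_def wsec_def)
  show "mnat (cId N (restr_obj a m \<sigma>)) i =
    cComp C (nar (mcod (cComp N (wsec C a m \<sigma> \<delta>) (wmor C a m \<sigma>)))
        (mmap (cComp N (wsec C a m \<sigma> \<delta>) (wmor C a m \<sigma>)) i) (mmap (cId N (restr_obj a m \<sigma>)) i))
      (mnat (cComp N (wsec C a m \<sigma> \<delta>) (wmor C a m \<sigma>)) i)"
    using i si ds[OF i] sd[OF si] X(5)[OF si] cat_id_comp_id[OF category X(1)[OF si]]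
    by (simp add: intN_comp intN_id wmor_def wsec_def)
qed (simp_all add: intN_comp intN_id wmor_def wsec_def)

lemma Wset_iso_Down:
  assumes w: "w \<in> Wset C Cm"
  shows "iso (Down C Cm Cp) (nclass C Cm Cp w)"
proof -
  obtain a m \<sigma> where w_def: "w = wmor C a m \<sigma>" and a: "is_nobj C Cm a"
    and su: "delta_surj m (ndim a) \<sigma>"
    using w unfolding Wset_eq by blast
  have s: "delta_map m (ndim a) \<sigma>" using su unfolding delta_surj_def by simp
  obtain \<delta> where d: "delta_map (ndim a) m \<delta>" and sd: "\<And>j. j \<le> ndim a \<Longrightarrow> \<sigma> (\<delta> j) = j"
    and ds: "\<And>i. i \<le> m \<Longrightarrow> \<delta> (\<sigma> i) \<le> i"
    using delta_surj_least_section[OF su] by blast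
  define v where "v = wsec C a m \<sigma> \<delta>"
  define R where "R = restr_obj a m \<sigma>"
  have wn: "is_nmor C Cm Cp w" unfolding w_def using wmor_nmor[OF a s] .
  have vn: "is_nmor C Cm Cp v" unfolding v_def using wsec_nmor[OF a s d sd] .
  have ends: "mdom w = R" "mcod w = a" "mdom v = a" "mcod v = R"
    unfolding w_def v_def R_def wmor_def wsec_def by simp_all
  have "cComp (Down C Cm Cp) (nclass C Cm Cp v) (nclass C Cm Cp w) = cId (Down C Cm Cp) R"
    using Down_comp[OF wn vn] ends wsec_comp_wmor_le_id[OF a s d sd ds]
    by (simp add: Down_simps nclass_eq r_into_equivclp w_def v_def R_def)
  moreover have "cComp (Down C Cm Cp) (nclass C Cm Cp w) (nclass C Cm Cp v) = cId (Down C Cm Cp) a"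
    using Down_comp[OF vn wn] ends wmor_comp_wsec[OF a d sd] by (simp add: Down_simps w_def v_def)
  moreover have "nclass C Cm Cp w \<in> cAr (Down C Cm Cp)" "nclass C Cm Cp v \<in> cAr (Down C Cm Cp)"
    using wn vn by (simp_all add: Down_simps)
  moreover have "cDom (Down C Cm Cp) (nclass C Cm Cp w) = R" "cCod (Down C Cm Cp) (nclass C Cm Cp w) = a"
    "cDom (Down C Cm Cp) (nclass C Cm Cp v) = a" "cCod (Down C Cm Cp) (nclass C Cm Cp v) = R"
    using ends by (simp_all add: Down_simps)
  ultimately show ?thesis
    unfolding iso_def by metis
qed

end

section \<open>Cylinders\<close>

text \<open>\<open>codegen m k\<close> is the codegeneracy \<open>s\<^sub>k : [m+1] \<rightarrow> [m]\<close> hitting \<open>k\<close> twice,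
  \<open>coface m j\<close> the coface \<open>d\<^sub>j : [m] \<rightarrow> [m+1]\<close> missing \<open>j\<close>.\<close>

definition codegen :: "nat \<Rightarrow> nat \<Rightarrow> nat \<Rightarrow> nat" where
  "codegen m k = (\<lambda>i. if i \<le> Suc m then (if i \<le> k then i else i - 1) else undefined)"

definition coface :: "nat \<Rightarrow> nat \<Rightarrow> nat \<Rightarrow> nat" where
  "coface m j = (\<lambda>i. if i \<le> m then (if i < j then i else Suc i) else undefined)"

lemma delta_surj_codegen: "k \<le> m \<Longrightarrow> delta_surj (Suc m) m (codegen m k)"
  unfolding delta_surj_def delta_map_def codegen_def
proof (intro conjI allI impI)
  fix j assume "k \<le> m" "j \<le> m"
  then show "\<exists>i\<le>Suc m. (if i \<le> Suc m then if i \<le> k then i else i - 1 else undefined) = j"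
  proof (cases "j \<le> k")
    case True then show ?thesis using \<open>k \<le> m\<close> by (intro exI[of _ j]) simp
  next
    case False then show ?thesis using \<open>j \<le> m\<close> by (intro exI[of _ "Suc j"]) simp
  qed
qed auto

lemma delta_map_coface: "delta_map m (Suc m) (coface m j)"
  unfolding delta_map_def coface_def by auto

lemma codegen_coface: "k \<le> j \<Longrightarrow> j \<le> Suc k \<Longrightarrow> i \<le> m \<Longrightarrow> codegen m k (coface m j i) = i"
  unfolding codegen_def coface_def by auto

definition nmor_splice :: "('o, 'm) nmor \<Rightarrow> ('o, 'm) nmor \<Rightarrow> nat \<Rightarrow> ('o, 'm) nmor" where
  "nmor_splice f f' k = (mdom f, mcod f,
     \<lambda>i. if i \<le> ndim (mdom f) then (if k \<le> i then mmap f' i else mmap f i) else undefined,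
     \<lambda>i. if i \<le> ndim (mdom f) then (if k \<le> i then mnat f' i else mnat f i) else undefined)"

definition cylinder :: "('o, 'm) nmor \<Rightarrow> ('o, 'm) nmor \<Rightarrow> nat \<Rightarrow> ('o, 'm) nmor" where
  "cylinder f f' k = (restr_obj (mdom f) (Suc (ndim (mdom f))) (codegen (ndim (mdom f)) k), mcod f,
     \<lambda>i. if i \<le> Suc (ndim (mdom f)) then (if i \<le> k then mmap f i else mmap f' (i - 1)) else undefined,
     \<lambda>i. if i \<le> Suc (ndim (mdom f)) then (if i \<le> k then mnat f i else mnat f' (i - 1)) else undefined)"

lemma nmor_splice_ends:
  assumes "nle C Cm Cp f f'"
  shows "nmor_splice f f' (Suc (ndim (mdom f))) = f" "nmor_splice f f' 0 = f'"
proof -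
  note L = nleD[OF assms]
  note F = nmorD[OF L(1)] and F' = nmorD[OF L(2), unfolded L(3,4)]
  have "nmor_splice f f' (Suc (ndim (mdom f))) = (mdom f, mcod f, mmap f, mnat f)"
    unfolding nmor_splice_def using F(5,10) by (auto intro!: ext)
  then show "nmor_splice f f' (Suc (ndim (mdom f))) = f" by (simp add: nmor_eta)
  have "nmor_splice f f' 0 = (mdom f', mcod f', mmap f', mnat f')"
    unfolding nmor_splice_def L(3,4) using F'(5,10) by (auto intro!: ext)
  then show "nmor_splice f f' 0 = f'" by (simp add: nmor_eta)
qed

lemma nle_map_mono:
  assumes le: "nle C Cm Cp f f'" and "i \<le> p" "p \<le> ndim (mdom f)"
  shows "mmap f i \<le> mmap f' p"
proof -
  have "mmap f i \<le> mmap f' i" using nleD(5)[OF le] assms by simp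
  also have "\<dots> \<le> mmap f' p" using nmorD(4)[OF nleD(2)[OF le]] nleD(3)[OF le] assms by simp
  finally show ?thesis .
qed

context wide_subcats
begin

lemma nle_naturality:
  assumes le: "nle C Cm Cp f f'" and ip: "i \<le> p" "p \<le> ndim (mdom f)"
  shows "cComp C (mnat f' p) (nar (mdom f) i p) = cComp C (nar (mcod f) (mmap f i) (mmap f' p)) (mnat f i)"
proof -
  note L = nleD[OF le] and F = nmorD[OF nleD(1)[OF le]]
  note F' = nmorD[OF L(2), unfolded L(3,4)]
  note X = nobjD[OF F(1)] and Y = nobjD[OF F(2)]
  let ?X = "mdom f" and ?Y = "mcod f" and ?\<alpha> = "mmap f" and ?\<alpha>' = "mmap f'"
  have a: "?\<alpha> i \<le> ?\<alpha> p" "?\<alpha> p \<le> ?\<alpha>' p" "?\<alpha>' p \<le> ndim ?Y" using F(4) L(5) F'(3) ip by auto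
  have tp: "mnat f p \<in> cAr C" and ti: "mnat f i \<in> cAr C" using F(6) Cp_arr ip by auto
  have nx: "nar ?X i p \<in> cAr C" using X(2) ip Cm_arr by auto
  have ny1: "nar ?Y (?\<alpha> p) (?\<alpha>' p) \<in> cAr C" and ny2: "nar ?Y (?\<alpha> i) (?\<alpha> p) \<in> cAr C"
    using Y(2) a Cm_arr by (auto intro: le_trans)
  have "cComp C (mnat f' p) (nar ?X i p)
      = cComp C (cComp C (nar ?Y (?\<alpha> p) (?\<alpha>' p)) (mnat f p)) (nar ?X i p)"
    using L(6) ip by simp
  also have "\<dots> = cComp C (nar ?Y (?\<alpha> p) (?\<alpha>' p)) (cComp C (mnat f p) (nar ?X i p))"
    using cat_assoc[OF category nx tp ny1] X(4) F(7,8) Y(3) ip a by (auto intro: le_trans)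
  also have "cComp C (mnat f p) (nar ?X i p) = cComp C (nar ?Y (?\<alpha> i) (?\<alpha> p)) (mnat f i)"
    using F(9) ip by simp
  also have "cComp C (nar ?Y (?\<alpha> p) (?\<alpha>' p)) (cComp C (nar ?Y (?\<alpha> i) (?\<alpha> p)) (mnat f i))
      = cComp C (cComp C (nar ?Y (?\<alpha> p) (?\<alpha>' p)) (nar ?Y (?\<alpha> i) (?\<alpha> p))) (mnat f i)"
    using cat_assoc[OF category ti ny2 ny1] F(8) Y(3,4) ip a by (auto intro: le_trans)
  also have "cComp C (nar ?Y (?\<alpha> p) (?\<alpha>' p)) (nar ?Y (?\<alpha> i) (?\<alpha> p)) = nar ?Y (?\<alpha> i) (?\<alpha>' p)"
    using Y(6) a by auto
  finally show ?thesis .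
qed

lemma cylinder_nmor:
  assumes le: "nle C Cm Cp f f'" and k: "k \<le> ndim (mdom f)"
  shows "is_nmor C Cm Cp (cylinder f f' k)"
proof -
  define m where "m = ndim (mdom f)"
  note L = nleD[OF le, folded m_def] and F = nmorD[OF nleD(1)[OF le], folded m_def]
  note F' = nmorD[OF L(2), unfolded L(3,4), folded m_def]
  have km: "k \<le> m" using k m_def by simp
  have sm: "delta_map (Suc m) (ndim (mdom f)) (codegen m k)"
    using delta_surj_codegen[OF km] unfolding delta_surj_def m_def by simp
  have "is_nmor C Cm Cp (restr_obj (mdom f) (Suc m) (codegen m k), mcod f,
      \<lambda>i. if i \<le> Suc m then (if i \<le> k then mmap f i else mmap f' (i - 1)) else undefined,
      \<lambda>i. if i \<le> Suc m then (if i \<le> k then mnat f i else mnat f' (i - 1)) else undefined)"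
  proof (rule nmorI)
    show "is_nobj C Cm (restr_obj (mdom f) (Suc m) (codegen m k))" using nobj_restr[OF F(1) sm] .
    show "is_nobj C Cm (mcod f)" using F(2) .
  next
    fix i assume i: "i \<le> Suc m"
    show "(if i \<le> k then mmap f i else mmap f' (i - 1)) \<le> ndim (mcod f)"
      "(if i \<le> k then mnat f i else mnat f' (i - 1)) \<in> Cp"
      "cDom C (if i \<le> k then mnat f i else mnat f' (i - 1)) = nob (restr_obj (mdom f) (Suc m) (codegen m k)) i"
      "cCod C (if i \<le> k then mnat f i else mnat f' (i - 1))
        = nob (mcod f) (if i \<le> k then mmap f i else mmap f' (i - 1))"
      using i km F(3,6,7,8) F'(3,6,7,8) by (auto simp: codegen_def)
  next
    fix i j assume ij: "i \<le> j" "j \<le> Suc m"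
    show "(if i \<le> k then mmap f i else mmap f' (i - 1)) \<le> (if j \<le> k then mmap f j else mmap f' (j - 1))"
    proof (cases "j \<le> k")
      case True then show ?thesis using ij km F(4) by auto
    next
      case False
      then show ?thesis
        using nle_map_mono[OF le, of i "j - 1"] F'(4)[of "i - 1" "j - 1"] ij m_def by auto
    qed
    show "cComp C (nar (mcod f) (if i \<le> k then mmap f i else mmap f' (i - 1))
          (if j \<le> k then mmap f j else mmap f' (j - 1)))
        (if i \<le> k then mnat f i else mnat f' (i - 1)) =
      cComp C (if j \<le> k then mnat f j else mnat f' (j - 1))
        (nar (restr_obj (mdom f) (Suc m) (codegen m k)) i j)"
    proof (cases "j \<le> k")
      case True then show ?thesis using ij km F(9)[of i j] by (simp add: codegen_def)
    next
      case False
      show ?thesis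
      proof (cases "i \<le> k")
        case True
        then show ?thesis using nle_naturality[OF le, of i "j - 1"] ij False m_def by (simp add: codegen_def)
      next
        case False2: False
        then show ?thesis using ij False F'(9)[of "i - 1" "j - 1"] by (simp add: codegen_def)
      qed
    qed
  qed simp
  then show ?thesis unfolding cylinder_def m_def .
qed

lemma cylinder_comp_wsec_coface:
  assumes le: "nle C Cm Cp f f'"
  defines "m \<equiv> ndim (mdom f)"
  shows "cComp N (cylinder f f' k) (wsec C (mdom f) (Suc m) (codegen m k) (coface m (Suc k)))
      = nmor_splice f f' (Suc k)"
    "cComp N (cylinder f f' k) (wsec C (mdom f) (Suc m) (codegen m k) (coface m k)) = nmor_splice f f' k"
proof -
  note L = nleD[OF le] and F = nmorD[OF nleD(1)[OF le]]
  note F' = nmorD[OF L(2), unfolded L(3,4)]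
  have t: "cComp C (mnat f i) (cId C (nob (mdom f) i)) = mnat f i"
    "cComp C (mnat f' i) (cId C (nob (mdom f) i)) = mnat f' i" if "i \<le> m" for i
  proof -
    have i: "i \<le> ndim (mdom f)" using that unfolding m_def .
    show "cComp C (mnat f i) (cId C (nob (mdom f) i)) = mnat f i"
      using cat_idr[OF category _ F(7)[OF i]] F(6)[OF i] Cp_arr by blast
    show "cComp C (mnat f' i) (cId C (nob (mdom f) i)) = mnat f' i"
      using cat_idr[OF category _ F'(7)[OF i]] F'(6)[OF i] Cp_arr by blast
  qed
  show "cComp N (cylinder f f' k) (wsec C (mdom f) (Suc m) (codegen m k) (coface m (Suc k)))
      = nmor_splice f f' (Suc k)"
    "cComp N (cylinder f f' k) (wsec C (mdom f) (Suc m) (codegen m k) (coface m k)) = nmor_splice f f' k"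
    unfolding intN_comp cylinder_def wsec_def nmor_splice_def nmor_simps m_def[symmetric]
    using t by (auto simp: coface_def intro!: ext)
qed

end

locale W_inverting_functor = wide_subcats C Cm Cp
  for C :: "('o, 'm) cat" and Cm Cp +
  fixes E :: "('eo, 'em) cat" and Go :: "('o, 'm) nobj \<Rightarrow> 'eo" and Gm :: "('o, 'm) nmor \<Rightarrow> 'em"
  assumes category_E: "category E" and G_functor: "is_functor (intN C Cm Cp) E Go Gm"
    and inverts_W: "\<forall>w\<in>Wset C Cm. iso E (Gm w)"
begin

lemma wsec_eq:
  assumes a: "is_nobj C Cm a" and su: "delta_surj m (ndim a) \<sigma>"
    and d: "delta_map (ndim a) m \<delta>" "\<And>j. j \<le> ndim a \<Longrightarrow> \<sigma> (\<delta> j) = j"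
    and d': "delta_map (ndim a) m \<delta>'" "\<And>j. j \<le> ndim a \<Longrightarrow> \<sigma> (\<delta>' j) = j"
  shows "Gm (wsec C a m \<sigma> \<delta>) = Gm (wsec C a m \<sigma> \<delta>')"
proof (rule iso_cancel_left[OF category_E])
  note G = functorD[OF G_functor]
  have s: "delta_map m (ndim a) \<sigma>" using su unfolding delta_surj_def by simp
  have r: "is_nmor C Cm Cp (wmor C a m \<sigma>)" using wmor_nmor[OF a s] .
  show "iso E (Gm (wmor C a m \<sigma>))" using inverts_W a su unfolding Wset_eq by blast
  have "Gm (wsec C a m \<sigma> \<epsilon>) \<in> cAr E \<and> cCod E (Gm (wsec C a m \<sigma> \<epsilon>)) = cDom E (Gm (wmor C a m \<sigma>)) \<and>
      cComp E (Gm (wmor C a m \<sigma>)) (Gm (wsec C a m \<sigma> \<epsilon>)) = cId E (Go a)"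
    if e: "delta_map (ndim a) m \<epsilon>" "\<And>j. j \<le> ndim a \<Longrightarrow> \<sigma> (\<epsilon> j) = j" for \<epsilon>
  proof -
    have e_nmor: "is_nmor C Cm Cp (wsec C a m \<sigma> \<epsilon>)" using wsec_nmor[OF a s e] .
    have ends: "mcod (wsec C a m \<sigma> \<epsilon>) = mdom (wmor C a m \<sigma>)" by (simp add: wsec_def wmor_def)
    show ?thesis
      using G(2,3,4)[of "wsec C a m \<sigma> \<epsilon>"] G(3)[of "wmor C a m \<sigma>"] G(6)[of "wsec C a m \<sigma> \<epsilon>" "wmor C a m \<sigma>"] ends G(5)[of a]
        e_nmor r a wmor_comp_wsec[OF a e] by simp
  qed
  from this[OF d] this[OF d'] show "Gm (wsec C a m \<sigma> \<delta>) \<in> cAr E" "Gm (wsec C a m \<sigma> \<delta>') \<in> cAr E"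
    "cCod E (Gm (wsec C a m \<sigma> \<delta>)) = cDom E (Gm (wmor C a m \<sigma>))"
    "cCod E (Gm (wsec C a m \<sigma> \<delta>')) = cDom E (Gm (wmor C a m \<sigma>))"
    "cComp E (Gm (wmor C a m \<sigma>)) (Gm (wsec C a m \<sigma> \<delta>)) = cComp E (Gm (wmor C a m \<sigma>)) (Gm (wsec C a m \<sigma> \<delta>'))"
    by simp_all
qed

lemma nle_imp_Gm_eq:
  assumes le: "nle C Cm Cp f f'"
  shows "Gm f = Gm f'"
proof -
  note G = functorD[OF G_functor]
  define m where "m = ndim (mdom f)"
  have X: "is_nobj C Cm (mdom f)" using nmorD(1)[OF nleD(1)[OF le]] .
  have step: "Gm (nmor_splice f f' (Suc k)) = Gm (nmor_splice f f' k)" if k: "k \<le> m" for k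
  proof -
    define \<sigma> where "\<sigma> = codegen m k"
    define H where "H = cylinder f f' k"
    define e0 where "e0 = wsec C (mdom f) (Suc m) \<sigma> (coface m (Suc k))"
    define e1 where "e1 = wsec C (mdom f) (Suc m) \<sigma> (coface m k)"
    have su: "delta_surj (Suc m) (ndim (mdom f)) \<sigma>"
      using delta_surj_codegen[OF k] unfolding \<sigma>_def m_def by simp
    have s: "delta_map (Suc m) (ndim (mdom f)) \<sigma>" using su unfolding delta_surj_def by simp
    have d: "delta_map (ndim (mdom f)) (Suc m) (coface m j)" for j
      using delta_map_coface unfolding m_def by simp
    have sd: "\<sigma> (coface m j i) = i" if "k \<le> j" "j \<le> Suc k" "i \<le> ndim (mdom f)" for i j
      using codegen_coface that unfolding \<sigma>_def m_def by simp
    have e01: "Gm e0 = Gm e1"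
      unfolding e0_def e1_def by (rule wsec_eq[OF X su d sd d sd]) simp_all
    have H_nmor: "is_nmor C Cm Cp H" unfolding H_def using cylinder_nmor[OF le] k m_def by simp
    have "Gm (cComp N H e) = cComp E (Gm H) (Gm e)" if "e = e0 \<or> e = e1" for e
    proof (rule G(6))
      show "e \<in> cAr N" using that wsec_nmor[OF X s d sd] unfolding e0_def e1_def by auto
      show "cCod N e = cDom N H"
        using that unfolding e0_def e1_def H_def wsec_def cylinder_def \<sigma>_def m_def by auto
    qed (use H_nmor in simp)
    then show ?thesis
      using e01 cylinder_comp_wsec_coface[OF le] unfolding H_def e0_def e1_def \<sigma>_def m_def by metis
  qed
  have "Gm (nmor_splice f f' k) = Gm (nmor_splice f f' 0)" if "k \<le> Suc m" for k
    using that by (induction k) (use step in auto)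
  from this[of "Suc m"] show ?thesis using nmor_splice_ends[OF le] unfolding m_def by simp
qed

lemma Gm_nclass_some: "Gm (SOME g. g \<in> nclass C Cm Cp f) = Gm f"
  using equivclp_fun_eq[of "nle C Cm Cp" Gm, OF nle_imp_Gm_eq equivclp_nclass_some] by simp

lemma Down_lift_functor: "is_functor (Down C Cm Cp) E Go (\<lambda>F. Gm (SOME f. f \<in> F))"
  unfolding is_functor_def
proof (intro conjI ballI impI)
  note G = functorD[OF G_functor]
  fix a assume "a \<in> cOb (Down C Cm Cp)"
  then have a: "is_nobj C Cm a" by (simp add: Down_simps)
  show "Go a \<in> cOb E" using G(1) a by simp
  show "Gm (SOME f. f \<in> cId (Down C Cm Cp) a) = cId E (Go a)"
    using G(5) a Gm_nclass_some by (simp add: Down_simps)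
next
  note G = functorD[OF G_functor]
  fix F assume "F \<in> cAr (Down C Cm Cp)"
  then obtain f where f: "is_nmor C Cm Cp f" and F: "F = nclass C Cm Cp f" by (auto simp: Down_simps)
  show "Gm (SOME f. f \<in> F) \<in> cAr E"
    "cDom E (Gm (SOME f. f \<in> F)) = Go (cDom (Down C Cm Cp) F)"
    "cCod E (Gm (SOME f. f \<in> F)) = Go (cCod (Down C Cm Cp) F)"
    using G(2,3,4) f F Gm_nclass_some by (simp_all add: Down_simps)
next
  note G = functorD[OF G_functor]
  fix F F' assume "F \<in> cAr (Down C Cm Cp)" "F' \<in> cAr (Down C Cm Cp)"
    and FF': "cCod (Down C Cm Cp) F = cDom (Down C Cm Cp) F'"
  then obtain f f' where f: "is_nmor C Cm Cp f" "F = nclass C Cm Cp f"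
    and f': "is_nmor C Cm Cp f'" "F' = nclass C Cm Cp f'" by (auto simp: Down_simps)
  have ff': "mcod f = mdom f'" using FF' f f' by (simp add: Down_simps)
  show "Gm (SOME g. g \<in> cComp (Down C Cm Cp) F' F) = cComp E (Gm (SOME g. g \<in> F')) (Gm (SOME g. g \<in> F))"
    using Down_comp[OF f(1) f'(1) ff'] G(6)[of f f'] f f' ff' Gm_nclass_some by simp
qed

end

lemma reedy_wide_subcats: "reedy C Cm Cp \<Longrightarrow> wide_subcats C Cm Cp"
  unfolding reedy_def wide_subcats_def by blast

theorem proposition6p3:
  fixes C :: "('o, 'm) cat" and Cm Cp :: "'m set"
    and E :: "('eo, 'em) cat"
    and Go :: "('o, 'm) nobj \<Rightarrow> 'eo" and Gm :: "('o, 'm) nmor \<Rightarrow> 'em"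
  assumes "reedy C Cm Cp"
  shows "(\<forall>w\<in>Wset C Cm. iso (Down C Cm Cp) (nclass C Cm Cp w)) \<and>
    (category E \<and> is_functor (intN C Cm Cp) E Go Gm \<and> (\<forall>w\<in>Wset C Cm. iso E (Gm w)) \<longrightarrow>
      (\<exists>Ho Hm. is_functor (Down C Cm Cp) E Ho Hm \<and>
         (\<forall>a\<in>cOb (intN C Cm Cp). Go a = Ho a) \<and>
         (\<forall>f\<in>cAr (intN C Cm Cp). Gm f = Hm (nclass C Cm Cp f)) \<and>
         (\<forall>Ho' Hm'. is_functor (Down C Cm Cp) E Ho' Hm' \<and>
            (\<forall>a\<in>cOb (intN C Cm Cp). Go a = Ho' a) \<and>
            (\<forall>f\<in>cAr (intN C Cm Cp). Gm f = Hm' (nclass C Cm Cp f)) \<longrightarrow>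
            (\<forall>x\<in>cOb (Down C Cm Cp). Ho' x = Ho x) \<and> (\<forall>F\<in>cAr (Down C Cm Cp). Hm' F = Hm F))))"
proof (intro conjI impI)
  interpret wide_subcats C Cm Cp using reedy_wide_subcats[OF assms] .
  show "\<forall>w\<in>Wset C Cm. iso (Down C Cm Cp) (nclass C Cm Cp w)" using Wset_iso_Down by blast
  assume "category E \<and> is_functor (intN C Cm Cp) E Go Gm \<and> (\<forall>w\<in>Wset C Cm. iso E (Gm w))"
  then interpret W_inverting_functor C Cm Cp E Go Gm by unfold_locales auto
  show "\<exists>Ho Hm. is_functor (Down C Cm Cp) E Ho Hm \<and>
         (\<forall>a\<in>cOb (intN C Cm Cp). Go a = Ho a) \<and>
         (\<forall>f\<in>cAr (intN C Cm Cp). Gm f = Hm (nclass C Cm Cp f)) \<and>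
         (\<forall>Ho' Hm'. is_functor (Down C Cm Cp) E Ho' Hm' \<and>
            (\<forall>a\<in>cOb (intN C Cm Cp). Go a = Ho' a) \<and>
            (\<forall>f\<in>cAr (intN C Cm Cp). Gm f = Hm' (nclass C Cm Cp f)) \<longrightarrow>
            (\<forall>x\<in>cOb (Down C Cm Cp). Ho' x = Ho x) \<and> (\<forall>F\<in>cAr (Down C Cm Cp). Hm' F = Hm F))"
    using Down_lift_functor Gm_nclass_some by (intro exI[of _ Go] exI[of _ "\<lambda>F. Gm (SOME f. f \<in> F)"])
      (auto simp: Down_simps)
qed

end
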